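(* There is a constant $c>0$ such that for every unit interval graph $G=(V,E)$ with $N=|V|\ge 2$ nodes, labeled $v_0,\dots,v_{N-1}$ in increasing order of the left endpoints of their intervals, the minimal $\pi$-OBDD representing $\chi_E$ has at most $c\,N/\log N$ nodes, where $\pi$ is the $2$-interleaved variable order with decreasing significance.
   Context: A unit interval graph on $N$ nodes is given by intervals $[a_i,a_i+1]$, $0\le i\le N-1$; two distinct nodes are adjacent iff their intervals intersect. Without loss of generality all endpoints are distinct, and the nodes are labeled so that $a_0<a_1<\dots<a_{N-1}$. Let $n=\lceil\log_2 N\rceil$. For $x=(x_0,\dots,x_{n-1})\in\{0,1\}^n$ put $|x|=\sum_{i=0}^{n-1}x_i2^i$. The characteristic function $\chi_E:\{0,1\}^{2n}\to\{0,1\}$ is defined by $\chi_E(x,y)=1$ iff $|x|,|y|<N$ and $\{v_{|x|},v_{|y|}\}\in E$. A $\pi$-OBDD for a variable order $\pi$ (a linear order of the input variables) is a directed acyclic rooted graph with two sinks labeled $0$ and $1$. Every inner node is labeled by a variable and has two outgoing edges labeled $0$ and $1$, and along every edge the variables respect $\pi$. An assignment determines a path from the root by following, at each node labeled $x_i$, the edge labeled by the value of $x_i$. The OBDD represents $f$ if this path always ends in the sink labeled $f(\text{assignment})$. The size of an OBDD is its number of nodes. The $2$-interleaved variable order with decreasing significance on $x,y\in\{0,1\}^n$ is $(x_{n-1},y_{n-1},x_{n-2},y_{n-2},\dots,x_0,y_0)$. *)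

theory Defs
  imports Complex_Main
begin

text \<open>Input variables: (False, i) stands for x_i and (True, i) stands for y_i.
  An assignment gives a Boolean value to every variable.\<close>

type_synonym var = "bool \<times> nat"

record obdd =
  nodes :: "nat set"
  root  :: nat
  sink0 :: nat
  sink1 :: nat
  var   :: "nat \<Rightarrow> var"
  lo    :: "nat \<Rightarrow> nat"
  hi    :: "nat \<Rightarrow> nat"

definition inner :: "obdd \<Rightarrow> nat set" where
  "inner B = nodes B - {sink0 B, sink1 B}"

definition precedes :: "var list \<Rightarrow> var \<Rightarrow> var \<Rightarrow> bool" where
  "precedes vo v w \<longleftrightarrow> (\<exists>i j. i < j \<and> j < length vo \<and> vo ! i = v \<and> vo ! j = w)"

definition is_pi_obdd :: "var list \<Rightarrow> obdd \<Rightarrow> bool" where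
  "is_pi_obdd vo B \<longleftrightarrow>
     finite (nodes B) \<and> root B \<in> nodes B \<and>
     sink0 B \<in> nodes B \<and> sink1 B \<in> nodes B \<and> sink0 B \<noteq> sink1 B \<and>
     (\<forall>u \<in> inner B. var B u \<in> set vo \<and> lo B u \<in> nodes B \<and> hi B u \<in> nodes B \<and>
        (lo B u \<in> inner B \<longrightarrow> precedes vo (var B u) (var B (lo B u))) \<and>
        (hi B u \<in> inner B \<longrightarrow> precedes vo (var B u) (var B (hi B u))))"

inductive path_ends :: "obdd \<Rightarrow> (var \<Rightarrow> bool) \<Rightarrow> nat \<Rightarrow> nat \<Rightarrow> bool" for B a where
  sink0: "path_ends B a (sink0 B) (sink0 B)"
| sink1: "path_ends B a (sink1 B) (sink1 B)"
| step: "u \<in> inner B \<Longrightarrow> path_ends B a (if a (var B u) then hi B u else lo B u) s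
          \<Longrightarrow> path_ends B a u s"

definition represents :: "obdd \<Rightarrow> ((var \<Rightarrow> bool) \<Rightarrow> bool) \<Rightarrow> bool" where
  "represents B f \<longleftrightarrow>
     (\<forall>a. path_ends B a (root B) (if f a then sink1 B else sink0 B))"

definition min_obdd_size :: "var list \<Rightarrow> ((var \<Rightarrow> bool) \<Rightarrow> bool) \<Rightarrow> nat" where
  "min_obdd_size vo f = (LEAST k. \<exists>B. is_pi_obdd vo B \<and> represents B f \<and> card (nodes B) = k)"

definition interleaved_order :: "nat \<Rightarrow> var list" where
  "interleaved_order n = concat (map (\<lambda>i. [(False, i), (True, i)]) (rev [0..<n]))"

definition bits_x :: "nat \<Rightarrow> (var \<Rightarrow> bool) \<Rightarrow> nat" where
  "bits_x n a = (\<Sum>i<n. if a (False, i) then 2 ^ i else 0)"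

definition bits_y :: "nat \<Rightarrow> (var \<Rightarrow> bool) \<Rightarrow> nat" where
  "bits_y n a = (\<Sum>i<n. if a (True, i) then 2 ^ i else 0)"

definition nbits :: "nat \<Rightarrow> nat" where
  "nbits N = nat \<lceil>log 2 (real N)\<rceil>"

text \<open>Unit interval graph given by left endpoints l 0 < ... < l (N-1), all 2N endpoints distinct.\<close>
definition unit_interval_rep :: "nat \<Rightarrow> (nat \<Rightarrow> real) \<Rightarrow> bool" where
  "unit_interval_rep N l \<longleftrightarrow>
     (\<forall>i j. i < j \<and> j < N \<longrightarrow> l i < l j) \<and>
     (\<forall>i < N. \<forall>j < N. l i \<noteq> l j + 1)"

definition uig_edge :: "(nat \<Rightarrow> real) \<Rightarrow> nat \<Rightarrow> nat \<Rightarrow> bool" where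
  "uig_edge l i j \<longleftrightarrow> i \<noteq> j \<and> {l i..l i + 1} \<inter> {l j..l j + 1} \<noteq> {}"

definition chi_E :: "nat \<Rightarrow> (nat \<Rightarrow> real) \<Rightarrow> (var \<Rightarrow> bool) \<Rightarrow> bool" where
  "chi_E N l a \<longleftrightarrow>
     (let n = nbits N in bits_x n a < N \<and> bits_y n a < N \<and> uig_edge l (bits_x n a) (bits_y n a))"

end

theory Submission
  imports Defs
begin

(*
  A pi-OBDD of minimal size for f needs at most two sinks plus one node per pair (j, g), where
  g is a subfunction of f obtained by fixing the first j variables of pi.  After fixing the top k
  bits of x and y, chi_E becomes a function of the N/2^k by N/2^k block (A, A') of the adjacency
  matrix selected by these bits.  Since neighbourhoods in a unit interval graph are intervals
  ending at a monotone index r x, each block is constant except those met by the staircase r,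
  which touches O(2^k) blocks; and each block is determined by the comparison of A and A' and a
  monotone staircase, giving at most 3 * 4^(N/2^k) blocks.  Using the first bound for small k
  and the second for the last log log N levels, the sum over all levels is O(N / log N).
*)

section \<open>Subfunctions and an OBDD built from them\<close>

definition fix_prefix :: "var list \<Rightarrow> nat \<Rightarrow> (var \<Rightarrow> bool) \<Rightarrow> (var \<Rightarrow> bool) \<Rightarrow> var \<Rightarrow> bool" where
  "fix_prefix vo j p a = (\<lambda>v. if v \<in> set (take j vo) then p v else a v)"

definition subfunction ::
    "var list \<Rightarrow> ((var \<Rightarrow> bool) \<Rightarrow> bool) \<Rightarrow> nat \<Rightarrow> (var \<Rightarrow> bool) \<Rightarrow> (var \<Rightarrow> bool) \<Rightarrow> bool" where
  "subfunction vo f j p = (\<lambda>a. f (fix_prefix vo j p a))"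

definition subfunctions :: "var list \<Rightarrow> ((var \<Rightarrow> bool) \<Rightarrow> bool) \<Rightarrow> nat \<Rightarrow> ((var \<Rightarrow> bool) \<Rightarrow> bool) set" where
  "subfunctions vo f j = range (subfunction vo f j)"

definition cofactor :: "var list \<Rightarrow> nat \<Rightarrow> bool \<Rightarrow> ((var \<Rightarrow> bool) \<Rightarrow> bool) \<Rightarrow> (var \<Rightarrow> bool) \<Rightarrow> bool" where
  "cofactor vo j c g = (\<lambda>a. g (a(vo ! j := c)))"

lemma finite_subfunctions: "finite (subfunctions vo f j)"
proof -
  have "subfunction vo f j p = subfunction vo f j (\<lambda>v. v \<in> {v \<in> set (take j vo). p v})" for p
    unfolding subfunction_def fix_prefix_def by (intro ext arg_cong[where f = f]) auto
  then have "subfunctions vo f j \<subseteq> (\<lambda>X. subfunction vo f j (\<lambda>v. v \<in> X)) ` Pow (set (take j vo))"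
    unfolding subfunctions_def by blast
  then show ?thesis by (rule finite_subset) simp
qed

lemma subfunctions_0: "subfunctions vo f 0 = {f}"
  unfolding subfunctions_def subfunction_def fix_prefix_def by auto

lemma cofactor_subfunction:
  assumes "distinct vo" "j < length vo"
  shows "cofactor vo j c (subfunction vo f j p) = subfunction vo f (Suc j) (p(vo ! j := c))"
proof -
  have "vo ! j \<notin> set (take j vo)"
    using assms by (auto simp: nth_image[symmetric] nth_eq_iff_index_eq)
  then show ?thesis
    using assms(2) unfolding cofactor_def subfunction_def fix_prefix_def
    by (intro ext arg_cong[where f = f]) (auto simp: take_Suc_conv_app_nth)
qed

lemma cofactor_in_subfunctions:
  "distinct vo \<Longrightarrow> j < length vo \<Longrightarrow> g \<in> subfunctions vo f j \<Longrightarrow> cofactor vo j c g \<in> subfunctions vo f (Suc j)"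
  unfolding subfunctions_def using cofactor_subfunction by blast

lemma card_subfunctions_Suc_le:
  assumes "distinct vo" "j < length vo"
  shows "card (subfunctions vo f (Suc j)) \<le> 2 * card (subfunctions vo f j)"
proof -
  let ?S = "(UNIV :: bool set) \<times> subfunctions vo f j"
  have "subfunction vo f (Suc j) p = cofactor vo j (p (vo ! j)) (subfunction vo f j p)" for p
    using cofactor_subfunction[OF assms, of "p (vo ! j)" f p] by simp
  then have "subfunctions vo f (Suc j) \<subseteq> (\<lambda>(c, g). cofactor vo j c g) ` ?S"
    unfolding subfunctions_def by auto
  then have "card (subfunctions vo f (Suc j)) \<le> card ((\<lambda>(c, g). cofactor vo j c g) ` ?S)"
    by (intro card_mono) (simp_all add: finite_subfunctions)
  also have "\<dots> \<le> card ?S"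
    by (intro card_image_le) (simp add: finite_subfunctions)
  also have "\<dots> = 2 * card (subfunctions vo f j)"
    by (simp add: card_cartesian_product)
  finally show ?thesis .
qed

lemma subfunctions_length_const:
  assumes "\<And>a a'. (\<forall>v \<in> set vo. a v = a' v) \<Longrightarrow> f a = f a'"
    and "g \<in> subfunctions vo f (length vo)"
  shows "g a = g a'"
proof -
  obtain p where "g = subfunction vo f (length vo) p"
    using assms(2) by (auto simp: subfunctions_def)
  moreover have "f (fix_prefix vo (length vo) p b) = f p" for b
    by (rule assms(1)) (simp add: fix_prefix_def)
  ultimately show ?thesis by (simp add: subfunction_def)
qed

definition subfunction_pairs :: "var list \<Rightarrow> ((var \<Rightarrow> bool) \<Rightarrow> bool) \<Rightarrow> (nat \<times> ((var \<Rightarrow> bool) \<Rightarrow> bool)) set" where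
  "subfunction_pairs vo f = Sigma {..<length vo} (subfunctions vo f)"

locale subfunction_obdd =
  fixes vo :: "var list" and f :: "(var \<Rightarrow> bool) \<Rightarrow> bool"
    and h :: "nat \<times> ((var \<Rightarrow> bool) \<Rightarrow> bool) \<Rightarrow> nat"
  assumes distinct: "distinct vo"
    and depends: "\<And>a a'. (\<forall>v \<in> set vo. a v = a' v) \<Longrightarrow> f a = f a'"
    and enum: "bij_betw h (subfunction_pairs vo f) {0..<card (subfunction_pairs vo f)}"
begin

abbreviation "T \<equiv> subfunction_pairs vo f"
abbreviation "M \<equiv> card T"

text \<open>Subfunctions of level length vo are constant, so g (\<lambda>_. False) selects their sink.\<close>
definition node :: "nat \<Rightarrow> ((var \<Rightarrow> bool) \<Rightarrow> bool) \<Rightarrow> nat" where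
  "node j g = (if j < length vo then h (j, g) else if g (\<lambda>_. False) then Suc M else M)"

definition succ :: "bool \<Rightarrow> nat \<Rightarrow> nat" where
  "succ c u = (case inv_into T h u of (j, g) \<Rightarrow> node (Suc j) (cofactor vo j c g))"

definition obdd :: obdd where
  "obdd = \<lparr>nodes = {0..<M + 2}, root = node 0 f, sink0 = M, sink1 = Suc M,
     var = (\<lambda>u. vo ! fst (inv_into T h u)), lo = succ False, hi = succ True\<rparr>"

lemma inner_obdd: "inner obdd = {0..<M}"
  by (auto simp: inner_def obdd_def)

lemma inner_obdd_eq: "inner obdd = h ` T"
  using enum inner_obdd by (simp add: bij_betw_def)

lemma inv_node: "j < length vo \<Longrightarrow> g \<in> subfunctions vo f j \<Longrightarrow> inv_into T h (node j g) = (j, g)"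
  using enum by (simp add: node_def bij_betw_def subfunction_pairs_def)

lemma node_inner: "j < length vo \<Longrightarrow> g \<in> subfunctions vo f j \<Longrightarrow> node j g \<in> inner obdd"
  unfolding inner_obdd_eq by (simp add: node_def subfunction_pairs_def)

lemma node_inner_iff:
  assumes "j \<le> length vo" "g \<in> subfunctions vo f j"
  shows "node j g \<in> inner obdd \<longleftrightarrow> j < length vo"
  using assms node_inner by (auto simp: node_def inner_obdd)

lemma node_in_nodes: "j \<le> length vo \<Longrightarrow> g \<in> subfunctions vo f j \<Longrightarrow> node j g \<in> nodes obdd"
  using node_inner[of j g] inner_obdd by (force simp: node_def obdd_def inner_def)

lemma obdd_step:
  assumes "j < length vo" "g \<in> subfunctions vo f j"
  shows "var obdd (node j g) = vo ! j"
    and "lo obdd (node j g) = node (Suc j) (cofactor vo j False g)"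
    and "hi obdd (node j g) = node (Suc j) (cofactor vo j True g)"
  using inv_node[OF assms] by (simp_all add: obdd_def succ_def)

lemma path_from_node:
  assumes "j \<le> length vo" "g \<in> subfunctions vo f j"
  shows "path_ends obdd a (node j g) (if g a then sink1 obdd else sink0 obdd)"
  using assms
proof (induction "length vo - j" arbitrary: j g)
  case 0
  then have j: "j = length vo" by simp
  have "g a = g (\<lambda>_. False)"
    using 0 j by (intro subfunctions_length_const[OF depends]) simp_all
  moreover have "node j g = (if g (\<lambda>_. False) then sink1 obdd else sink0 obdd)"
    using j by (simp add: node_def obdd_def)
  ultimately show ?case
    using path_ends.sink0 path_ends.sink1 by simp
next
  case (Suc d)
  then have j: "j < length vo" by simp
  define g' where "g' = cofactor vo j (a (vo ! j)) g"
  have "g' a = g a"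
    by (simp add: g'_def cofactor_def)
  moreover have "path_ends obdd a (node (Suc j) g') (if g' a then sink1 obdd else sink0 obdd)"
    using Suc.hyps(1)[of "Suc j" g'] Suc.hyps(2) j
      cofactor_in_subfunctions[OF distinct j Suc.prems(2)] by (simp add: g'_def)
  moreover have "(if a (var obdd (node j g)) then hi obdd (node j g) else lo obdd (node j g))
      = node (Suc j) g'"
    using obdd_step[OF j Suc.prems(2)] by (simp add: g'_def)
  ultimately show ?case
    by (intro path_ends.step[OF node_inner[OF j Suc.prems(2)]]) simp
qed

lemma represents_obdd: "represents obdd f"
  unfolding represents_def
  using path_from_node[of 0 f] by (simp add: subfunctions_0 obdd_def)

lemma is_pi_obdd: "is_pi_obdd vo obdd"
  unfolding is_pi_obdd_def
proof (intro conjI ballI)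
  show "finite (nodes obdd)" "sink0 obdd \<in> nodes obdd" "sink1 obdd \<in> nodes obdd"
    "sink0 obdd \<noteq> sink1 obdd"
    by (simp_all add: obdd_def)
  show "root obdd \<in> nodes obdd"
    using node_in_nodes[of 0 f] by (simp add: subfunctions_0 obdd_def)
next
  fix u assume "u \<in> inner obdd"
  then obtain j g where j: "j < length vo" and g: "g \<in> subfunctions vo f j" and u: "u = node j g"
    unfolding inner_obdd_eq by (auto simp: subfunction_pairs_def node_def)
  have succ: "cofactor vo j c g \<in> subfunctions vo f (Suc j)" for c
    using cofactor_in_subfunctions[OF distinct j g] .
  have prec: "node (Suc j) (cofactor vo j c g) \<in> inner obdd \<Longrightarrow>
      precedes vo (vo ! j) (var obdd (node (Suc j) (cofactor vo j c g)))" for c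
    using node_inner_iff[OF _ succ] obdd_step(1)[OF _ succ] j
    unfolding precedes_def by (metis Suc_leI lessI)
  show "var obdd u \<in> set vo"
    using obdd_step(1)[OF j g] j u by simp
  show "lo obdd u \<in> nodes obdd" "hi obdd u \<in> nodes obdd"
    using obdd_step[OF j g] node_in_nodes[OF _ succ] j u by simp_all
  show "lo obdd u \<in> inner obdd \<longrightarrow> precedes vo (var obdd u) (var obdd (lo obdd u))"
    "hi obdd u \<in> inner obdd \<longrightarrow> precedes vo (var obdd u) (var obdd (hi obdd u))"
    using obdd_step[OF j g] prec u by simp_all
qed

lemma card_obdd: "card (nodes obdd) = 2 + (\<Sum>j < length vo. card (subfunctions vo f j))"
  by (simp add: obdd_def subfunction_pairs_def finite_subfunctions)

end

lemma min_obdd_size_le_subfunctions: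
  assumes "distinct vo" and "\<And>a a'. (\<forall>v \<in> set vo. a v = a' v) \<Longrightarrow> f a = f a'"
  shows "min_obdd_size vo f \<le> 2 + (\<Sum>j < length vo. card (subfunctions vo f j))"
proof -
  have "finite (subfunction_pairs vo f)"
    unfolding subfunction_pairs_def by (simp add: finite_subfunctions)
  then obtain h where "bij_betw h (subfunction_pairs vo f) {0..<card (subfunction_pairs vo f)}"
    using ex_bij_betw_finite_nat by blast
  then interpret subfunction_obdd vo f h
    using assms by unfold_locales
  show ?thesis
    unfolding min_obdd_size_def card_obdd[symmetric]
    using is_pi_obdd represents_obdd by (intro Least_le) blast
qed

section \<open>The interleaved variable order\<close>

lemma interleaved_order_Suc: "interleaved_order (Suc n) = [(False, n), (True, n)] @ interleaved_order n"
  by (simp add: interleaved_order_def)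

lemma length_interleaved_order: "length (interleaved_order n) = 2 * n"
  by (induction n) (simp_all add: interleaved_order_def)

lemma set_interleaved_order: "set (interleaved_order n) = {v. snd v < n}"
proof (induction n)
  case 0
  then show ?case by (simp add: interleaved_order_def)
next
  case (Suc n)
  have "{v. snd v < Suc n} = {(False, n), (True, n)} \<union> {v :: var. snd v < n}"
    by (auto simp: less_Suc_eq)
  with Suc show ?case
    by (simp add: interleaved_order_Suc)
qed

lemma distinct_interleaved_order: "distinct (interleaved_order n)"
  by (induction n) (simp_all add: interleaved_order_Suc set_interleaved_order interleaved_order_def[of 0])

lemma interleaved_order_add:
  "interleaved_order (m + k) =
     concat (map (\<lambda>i. [(False, i), (True, i)]) (rev [m..<m + k])) @ interleaved_order m"
  by (simp add: interleaved_order_def upt_add_eq_append[of 0 m])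

lemma set_take_interleaved_order:
  assumes "k \<le> n"
  shows "set (take (2 * k) (interleaved_order n)) = {v. n - k \<le> snd v \<and> snd v < n}"
proof -
  let ?top = "concat (map (\<lambda>i. [(False, i), (True, i)]) (rev [n - k..<n]))"
  have "interleaved_order n = ?top @ interleaved_order (n - k)"
    using interleaved_order_add[of "n - k" k] assms by simp
  moreover have "length ?top = 2 * k"
    using assms by (simp add: length_concat o_def sum_list_triv)
  ultimately have "take (2 * k) (interleaved_order n) = ?top"
    by simp
  then show ?thesis
    by auto
qed

definition top_bits :: "bool \<Rightarrow> nat \<Rightarrow> nat \<Rightarrow> (var \<Rightarrow> bool) \<Rightarrow> nat" where
  "top_bits c n k a = (\<Sum>i<k. if a (c, n - k + i) then 2 ^ i else 0)"

lemma sum_lessThan_add: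
  fixes f :: "nat \<Rightarrow> 'a::comm_monoid_add"
  shows "(\<Sum>i<m + k. f i) = (\<Sum>i<m. f i) + (\<Sum>i<k. f (m + i))"
  by (induction k) (simp_all add: add.assoc)

lemma bits_split:
  assumes "k \<le> n"
  shows "bits_x n a = 2 ^ (n - k) * top_bits False n k a + bits_x (n - k) a"
    and "bits_y n a = 2 ^ (n - k) * top_bits True n k a + bits_y (n - k) a"
proof -
  have n: "n = (n - k) + k"
    using assms by simp
  show "bits_x n a = 2 ^ (n - k) * top_bits False n k a + bits_x (n - k) a"
    unfolding bits_x_def top_bits_def
    by (subst n, subst sum_lessThan_add) (auto simp: sum_distrib_left power_add intro!: sum.cong)
  show "bits_y n a = 2 ^ (n - k) * top_bits True n k a + bits_y (n - k) a"
    unfolding bits_y_def top_bits_def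
    by (subst n, subst sum_lessThan_add) (auto simp: sum_distrib_left power_add intro!: sum.cong)
qed

lemma binary_sum_less: "(\<Sum>i<k. if P i then (2::nat) ^ i else 0) < 2 ^ k"
  by (induction k) auto

lemma bits_x_less: "bits_x m a < 2 ^ m"
  unfolding bits_x_def by (rule binary_sum_less)

lemma bits_y_less: "bits_y m a < 2 ^ m"
  unfolding bits_y_def by (rule binary_sum_less)

lemma top_bits_less: "top_bits c n k a < 2 ^ k"
  unfolding top_bits_def by (rule binary_sum_less)

lemma bits_eq_if_agree:
  assumes "\<forall>v \<in> set (interleaved_order n). a v = a' v"
  shows "bits_x n a = bits_x n a'" "bits_y n a = bits_y n a'"
  using assms unfolding bits_x_def bits_y_def set_interleaved_order by (auto intro!: sum.cong)

lemma subfunction_interleaved_order: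
  assumes f: "\<And>a. f a = F (bits_x n a) (bits_y n a)" and "k \<le> n"
  shows "subfunction (interleaved_order n) f (2 * k) p =
    (\<lambda>a. F (2 ^ (n - k) * top_bits False n k p + bits_x (n - k) a)
           (2 ^ (n - k) * top_bits True n k p + bits_y (n - k) a))"
proof
  fix a
  let ?b = "fix_prefix (interleaved_order n) (2 * k) p a"
  have b: "?b (c, i) = (if n - k \<le> i \<and> i < n then p (c, i) else a (c, i))" for c i
    using set_take_interleaved_order[OF assms(2)] by (simp add: fix_prefix_def)
  have "bits_x (n - k) ?b = bits_x (n - k) a" "bits_y (n - k) ?b = bits_y (n - k) a"
    unfolding bits_x_def bits_y_def using assms(2) by (auto simp: b intro!: sum.cong)
  moreover have "top_bits c n k ?b = top_bits c n k p" for c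
    unfolding top_bits_def using assms(2) by (auto simp: b intro!: sum.cong)
  ultimately show "subfunction (interleaved_order n) f (2 * k) p a =
      F (2 ^ (n - k) * top_bits False n k p + bits_x (n - k) a)
        (2 ^ (n - k) * top_bits True n k p + bits_y (n - k) a)"
    using bits_split[OF assms(2), of ?b] by (simp add: subfunction_def f)
qed

section \<open>Blocks of a monotone adjacency relation\<close>

definition reach_adj :: "(nat \<Rightarrow> nat) \<Rightarrow> nat \<Rightarrow> nat \<Rightarrow> bool" where
  "reach_adj r x y \<longleftrightarrow> x \<noteq> y \<and> (if x < y then y \<le> r x else x \<le> r y)"

lemma reach_adj_sym: "reach_adj r x y = reach_adj r y x"
  unfolding reach_adj_def by auto

definition block_threshold :: "(nat \<Rightarrow> nat) \<Rightarrow> nat \<Rightarrow> nat \<Rightarrow> nat \<Rightarrow> nat \<Rightarrow> nat" where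
  "block_threshold r B A A' s = min B (r (min A A' * B + s) + 1 - max A A' * B)"

definition block_pattern :: "int \<Rightarrow> (nat \<Rightarrow> nat) \<Rightarrow> nat \<Rightarrow> nat \<Rightarrow> bool" where
  "block_pattern c T s t \<longleftrightarrow>
     (if c = 1 then t < T s else if c = -1 then s < T t
      else s \<noteq> t \<and> (if s < t then t < T s else s < T t))"

lemma block_less:
  fixes A A' B s t :: nat
  assumes "A < A'" "s < B"
  shows "A * B + s < A' * B + t"
proof -
  have "Suc A * B \<le> A' * B"
    using assms(1) by (intro mult_right_mono) auto
  then show ?thesis
    using assms(2) by simp
qed

lemma le_reach_iff_less_block_threshold:
  "t < B \<Longrightarrow> max A A' * B + t \<le> r (min A A' * B + s) \<longleftrightarrow> t < block_threshold r B A A' s"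
  unfolding block_threshold_def by auto

lemma reach_adj_block:
  assumes "s < B" "t < B"
  shows "reach_adj r (A * B + s) (A' * B + t) =
    block_pattern (sgn (int A' - int A)) (block_threshold r B A A') s t"
proof -
  consider "A < A'" | "A = A'" | "A' < A" by linarith
  then show ?thesis
  proof cases
    case 1
    then show ?thesis
      using block_less[OF 1 assms(1), of t] le_reach_iff_less_block_threshold[OF assms(2), of A A' r s]
      by (simp add: reach_adj_def block_pattern_def max_def min_def)
  next
    case 2
    then show ?thesis
      using le_reach_iff_less_block_threshold[OF assms(2), of A A r s]
        le_reach_iff_less_block_threshold[OF assms(1), of A A r t]
      by (auto simp: reach_adj_def block_pattern_def)
  next
    case 3
    then show ?thesis
      using block_less[OF 3 assms(2), of s] le_reach_iff_less_block_threshold[OF assms(1), of A A' r t]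
      by (simp add: reach_adj_def block_pattern_def max_def min_def)
  qed
qed

lemma nth_sorted_list_of_set_image:
  fixes F :: "nat \<Rightarrow> 'a::linorder"
  assumes "strict_mono_on {..<B} F" "s < B"
  shows "sorted_list_of_set (F ` {..<B}) ! s = F s"
proof -
  have "sorted_wrt (<) (map F [0..<B])"
    using assms(1) by (auto simp: sorted_wrt_iff_nth_less strict_mono_on_def)
  then have "sorted_list_of_set (set (map F [0..<B])) = map F [0..<B]"
    by (intro sorted_list_of_set.idem_if_sorted_distinct) (auto simp: strict_sorted_iff)
  then have "sorted_list_of_set (F ` {..<B}) = map F [0..<B]"
    by (simp add: lessThan_atLeast0)
  then show ?thesis
    using assms(2) by simp
qed

text \<open>The staircase encodes the monotone threshold function of a block as a subset of
  {..<2*B}; this bounds the number of blocks by 4^B instead of 2^(B^2).\<close>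
definition staircase :: "(nat \<Rightarrow> nat) \<Rightarrow> nat \<Rightarrow> nat \<Rightarrow> nat \<Rightarrow> nat set" where
  "staircase r B A A' = (\<lambda>s. s + block_threshold r B A A' s) ` {..<B}"

definition stair_height :: "nat set \<Rightarrow> nat \<Rightarrow> nat" where
  "stair_height E s = sorted_list_of_set E ! s - s"

lemma mono_block_threshold:
  assumes "mono r"
  shows "mono (block_threshold r B A A')"
proof (rule monoI)
  fix s s' :: nat
  assume "s \<le> s'"
  then have "r (min A A' * B + s) \<le> r (min A A' * B + s')"
    using assms by (simp add: monoD)
  then show "block_threshold r B A A' s \<le> block_threshold r B A A' s'"
    unfolding block_threshold_def by (intro min.mono diff_le_mono) simp_all
qed

lemma stair_height_staircase:
  assumes "mono r" "s < B"
  shows "stair_height (staircase r B A A') s = block_threshold r B A A' s"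
proof -
  have "strict_mono_on {..<B} (\<lambda>s. s + block_threshold r B A A' s)"
    using mono_block_threshold[OF assms(1)]
    by (intro strict_mono_onI) (simp add: add_less_le_mono monoD)
  from nth_sorted_list_of_set_image[OF this assms(2)] show ?thesis
    unfolding stair_height_def staircase_def by simp
qed

lemma staircase_subset: "staircase r B A A' \<subseteq> {..<2 * B}"
proof -
  have "block_threshold r B A A' s \<le> B" for s
    by (simp add: block_threshold_def)
  then show ?thesis
    unfolding staircase_def by (auto simp: mult_2 intro: add_less_le_mono)
qed

lemma card_blocks_le_exp:
  fixes u w :: "'a \<Rightarrow> nat"
  assumes "mono r" and u: "\<And>a. u a < B" and w: "\<And>a. w a < B"
  shows "card ((\<lambda>(A, A') a. reach_adj r (A * B + u a) (A' * B + w a)) ` X) \<le> 3 * 4 ^ B"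
proof -
  let ?blocks = "\<lambda>(A, A') a. reach_adj r (A * B + u a) (A' * B + w a)"
  let ?pattern = "\<lambda>(c, E) a. block_pattern c (stair_height E) (u a) (w a)"
  let ?codes = "{-1, 0, 1::int} \<times> Pow {..<2 * B}"
  have "?blocks (A, A') \<in> ?pattern ` ?codes" for A A'
  proof (rule image_eqI)
    show "?blocks (A, A') = ?pattern (sgn (int A' - int A), staircase r B A A')"
      using reach_adj_block[OF u w] stair_height_staircase[OF assms(1) u]
        stair_height_staircase[OF assms(1) w]
      by (auto simp: block_pattern_def)
    show "(sgn (int A' - int A), staircase r B A A') \<in> ?codes"
      using staircase_subset by (auto simp: sgn_if)
  qed
  then have "?blocks ` X \<subseteq> ?pattern ` ?codes"
    by auto
  then have "card (?blocks ` X) \<le> card (?pattern ` ?codes)"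
    by (intro card_mono) simp_all
  also have "\<dots> \<le> card ?codes"
    by (intro card_image_le) simp
  also have "\<dots> = 3 * 4 ^ B"
    by (simp add: card_cartesian_product card_Pow power_mult)
  finally show ?thesis .
qed

definition mixed_block :: "(nat \<Rightarrow> nat) \<Rightarrow> nat \<Rightarrow> nat \<Rightarrow> nat \<Rightarrow> bool" where
  "mixed_block r B A A' \<longleftrightarrow>
     (\<exists>s<B. \<exists>t<B. reach_adj r (A * B + s) (A' * B + t)) \<and>
     (\<exists>s<B. \<exists>t<B. \<not> reach_adj r (A * B + s) (A' * B + t))"

lemma mixed_block_sym: "mixed_block r B A A' = mixed_block r B A' A"
  unfolding mixed_block_def using reach_adj_sym by blast

lemma mixed_block_bounds:
  assumes "mono r" "0 < B" "A < A'" "mixed_block r B A A'"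
  shows "r (A * B) div B \<le> A'" and "A' \<le> r (Suc A * B) div B"
proof -
  obtain s t where st: "s < B" "t < B" "\<not> reach_adj r (A * B + s) (A' * B + t)"
    using assms(4) by (auto simp: mixed_block_def)
  then have "r (A * B + s) < A' * B + t"
    using block_less[OF assms(3) st(1), of t] by (simp add: reach_adj_def)
  moreover have "r (A * B) \<le> r (A * B + s)"
    using assms(1) by (simp add: monoD)
  ultimately have "r (A * B) < Suc A' * B"
    using st(2) by simp
  then show "r (A * B) div B \<le> A'"
    using assms(2) by (simp add: div_less_iff_less_mult less_Suc_eq_le[symmetric])
next
  obtain s t where st: "s < B" "t < B" "reach_adj r (A * B + s) (A' * B + t)"
    using assms(4) by (auto simp: mixed_block_def)
  then have "A' * B + t \<le> r (A * B + s)"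
    using block_less[OF assms(3) st(1), of t] by (simp add: reach_adj_def)
  moreover have "r (A * B + s) \<le> r (Suc A * B)"
    using assms(1) st(1) by (simp add: monoD)
  ultimately have "A' * B \<le> r (Suc A * B)"
    by simp
  then show "A' \<le> r (Suc A * B) div B"
    using div_le_mono[of "A' * B" _ B] assms(2) by simp
qed

lemma card_band_le:
  fixes R :: "nat \<Rightarrow> nat"
  assumes "mono R"
  shows "card (Sigma {..<K} (\<lambda>A. {R A..R (Suc A)})) \<le> R K + K"
proof (induction K)
  case 0
  then show ?case by simp
next
  case (Suc K)
  have "R K \<le> R (Suc K)"
    using assms by (simp add: monoD)
  with Suc show ?case
    by (simp add: lessThan_Suc)
qed

lemma card_mixed_blocks:
  assumes "mono r" "0 < B" "r (K * B) = K * B"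
  shows "card {(A, A') \<in> {..<K} \<times> {..<K}. mixed_block r B A A'} \<le> 5 * K"
proof -
  define R where "R A = r (A * B) div B" for A
  define U where "U = Sigma {..<K} (\<lambda>A. {R A..R (Suc A)})"
  have "mono R"
    unfolding R_def using assms(1) by (intro monoI div_le_mono) (simp add: monoD)
  have "card U \<le> 2 * K"
    using card_band_le[OF \<open>mono R\<close>, of K] assms(2,3) by (simp add: U_def R_def)
  have "{(A, A') \<in> {..<K} \<times> {..<K}. mixed_block r B A A'} \<subseteq> (\<lambda>A. (A, A)) ` {..<K} \<union> U \<union> prod.swap ` U"
  proof (rule subsetI)
    fix p assume "p \<in> {(A, A') \<in> {..<K} \<times> {..<K}. mixed_block r B A A'}"
    then obtain A A' where p: "p = (A, A')" and AA': "A < K" "A' < K" "mixed_block r B A A'"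
      by auto
    consider "A < A'" | "A = A'" | "A' < A" by linarith
    then have "(A, A') \<in> (\<lambda>A. (A, A)) ` {..<K} \<union> U \<union> prod.swap ` U"
    proof cases
      case 1
      then have "(A, A') \<in> U"
        using mixed_block_bounds[OF assms(1,2) 1 AA'(3)] AA' by (simp add: U_def R_def)
      then show ?thesis by blast
    next
      case 2
      then show ?thesis using AA' by blast
    next
      case 3
      then have "(A', A) \<in> U"
        using mixed_block_bounds[OF assms(1,2) 3] AA' mixed_block_sym by (simp add: U_def R_def)
      then show ?thesis by (auto intro: rev_image_eqI)
    qed
    then show "p \<in> (\<lambda>A. (A, A)) ` {..<K} \<union> U \<union> prod.swap ` U"
      using p by simp
  qed
  then have "card {(A, A') \<in> {..<K} \<times> {..<K}. mixed_block r B A A'}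
      \<le> card ((\<lambda>A. (A, A)) ` {..<K} \<union> U \<union> prod.swap ` U)"
    by (intro card_mono) (simp_all add: U_def)
  also have "\<dots> \<le> card ((\<lambda>A. (A, A)) ` {..<K}) + card U + card (prod.swap ` U)"
    by (intro order.trans[OF card_Un_le] add_mono card_Un_le order.refl)
  also have "\<dots> \<le> K + 2 * K + 2 * K"
    using card_image_le[of "{..<K}" "\<lambda>A. (A, A)"] card_image_le[of U prod.swap] \<open>card U \<le> 2 * K\<close>
    by (simp add: U_def)
  finally show ?thesis by simp
qed

lemma card_blocks_le_linear:
  fixes u w :: "'a \<Rightarrow> nat"
  assumes "mono r" "0 < B" "r (K * B) = K * B" and u: "\<And>a. u a < B" and w: "\<And>a. w a < B"
  shows "card ((\<lambda>(A, A') a. reach_adj r (A * B + u a) (A' * B + w a)) ` ({..<K} \<times> {..<K})) \<le> 5 * K + 2"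
proof -
  let ?blocks = "\<lambda>(A, A') a. reach_adj r (A * B + u a) (A' * B + w a)"
  let ?mixed = "{(A, A') \<in> {..<K} \<times> {..<K}. mixed_block r B A A'}"
  have "?blocks ` ({..<K} \<times> {..<K}) \<subseteq> {\<lambda>_. True, \<lambda>_. False} \<union> ?blocks ` ?mixed"
  proof (rule subsetI)
    fix g assume "g \<in> ?blocks ` ({..<K} \<times> {..<K})"
    then obtain A A' where g: "g = ?blocks (A, A')" and AA': "A < K" "A' < K"
      by auto
    show "g \<in> {\<lambda>_. True, \<lambda>_. False} \<union> ?blocks ` ?mixed"
    proof (cases "mixed_block r B A A'")
      case True
      then show ?thesis
        using g AA' by blast
    next
      case False
      then have "?blocks (A, A') = (\<lambda>_. True) \<or> ?blocks (A, A') = (\<lambda>_. False)"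
      using u w unfolding mixed_block_def by auto
      then show ?thesis
        using g by blast
    qed
  qed
  moreover have "finite ?mixed"
    by (rule finite_subset[of _ "{..<K} \<times> {..<K}"]) auto
  ultimately have "card (?blocks ` ({..<K} \<times> {..<K})) \<le> card ({\<lambda>_. True, \<lambda>_. False} \<union> ?blocks ` ?mixed)"
    by (intro card_mono) simp_all
  also have "\<dots> \<le> card {\<lambda>_::'a. True, \<lambda>_. False} + card (?blocks ` ?mixed)"
    by (rule card_Un_le)
  also have "\<dots> \<le> 2 + card ?mixed"
    using \<open>finite ?mixed\<close> by (intro add_mono card_image_le) (simp_all add: card_insert_if)
  also have "\<dots> \<le> 5 * K + 2"
    using card_mixed_blocks[OF assms(1-3)] by simp
  finally show ?thesis .
qed

section \<open>Unit interval graphs\<close>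

text \<open>The neighbours of x with larger index form the interval x < y \<le> last_neighbour N l x;
  indices \<ge> N are mapped to themselves so that the function stays monotone on all of nat.\<close>
definition last_neighbour :: "nat \<Rightarrow> (nat \<Rightarrow> real) \<Rightarrow> nat \<Rightarrow> nat" where
  "last_neighbour N l x = (if x < N then Max {j. j < N \<and> l j \<le> l x + 1} else x)"

lemma unit_interval_rep_mono:
  "unit_interval_rep N l \<Longrightarrow> i \<le> j \<Longrightarrow> j < N \<Longrightarrow> l i \<le> l j"
  unfolding unit_interval_rep_def by (cases "i = j") (auto intro: less_imp_le)

lemma last_neighbour_in:
  assumes "x < N"
  shows "last_neighbour N l x < N" "x \<le> last_neighbour N l x" "l (last_neighbour N l x) \<le> l x + 1"
proof -
  let ?S = "{j. j < N \<and> l j \<le> l x + 1}"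
  have "finite ?S" "x \<in> ?S"
    using assms by simp_all
  then have "Max ?S \<in> ?S" "x \<le> Max ?S"
    by (metis Max_in empty_iff, simp)
  then have "last_neighbour N l x \<in> ?S" "x \<le> last_neighbour N l x"
    using assms by (simp_all add: last_neighbour_def)
  then show "last_neighbour N l x < N" "x \<le> last_neighbour N l x" "l (last_neighbour N l x) \<le> l x + 1"
    by simp_all
qed

lemma le_last_neighbour_iff:
  assumes "unit_interval_rep N l" "x < N" "y < N"
  shows "y \<le> last_neighbour N l x \<longleftrightarrow> l y \<le> l x + 1"
proof
  assume "y \<le> last_neighbour N l x"
  then show "l y \<le> l x + 1"
    using unit_interval_rep_mono[OF assms(1) _ last_neighbour_in(1)[OF assms(2)]]
      last_neighbour_in(3)[of x N l] assms(2) by (meson order_trans)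
next
  assume "l y \<le> l x + 1"
  then show "y \<le> last_neighbour N l x"
    using assms(2,3) by (simp add: last_neighbour_def)
qed

lemma mono_last_neighbour:
  assumes "unit_interval_rep N l"
  shows "mono (last_neighbour N l)"
proof (rule monoI)
  fix x x' :: nat
  assume "x \<le> x'"
  show "last_neighbour N l x \<le> last_neighbour N l x'"
  proof (cases "x' < N")
    case True
    then have "x < N"
      using \<open>x \<le> x'\<close> by simp
    have "l (last_neighbour N l x) \<le> l x' + 1"
      using last_neighbour_in(3)[of x N l] \<open>x < N\<close> unit_interval_rep_mono[OF assms \<open>x \<le> x'\<close> True]
      by simp
    then show ?thesis
      using le_last_neighbour_iff[OF assms True last_neighbour_in(1)[of x N l]] \<open>x < N\<close> by simp
  next
    case False
    then show ?thesis
      using \<open>x \<le> x'\<close> last_neighbour_in(1)[of x N l] by (auto simp: last_neighbour_def)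
  qed
qed

lemma unit_intervals_meet_iff:
  fixes a b :: real
  assumes "a < b"
  shows "{a..a + 1} \<inter> {b..b + 1} \<noteq> {} \<longleftrightarrow> b \<le> a + 1"
  using assms by (auto simp: set_eq_iff)

lemma uig_edge_iff_le_last_neighbour:
  assumes "unit_interval_rep N l" "x < y"
  shows "y < N \<and> uig_edge l x y \<longleftrightarrow> y \<le> last_neighbour N l x"
proof (cases "y < N")
  case True
  then have "l x < l y"
    using assms unfolding unit_interval_rep_def by blast
  then show ?thesis
    using le_last_neighbour_iff[OF assms(1)] assms(2) True unit_intervals_meet_iff[of "l x" "l y"]
    by (simp add: uig_edge_def)
next
  case False
  then show ?thesis
    using assms(2) last_neighbour_in(1)[of x N l] by (auto simp: last_neighbour_def)
qed

lemma uig_edge_iff_reach_adj: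
  assumes "unit_interval_rep N l"
  shows "x < N \<and> y < N \<and> uig_edge l x y \<longleftrightarrow> reach_adj (last_neighbour N l) x y"
proof -
  consider "x < y" | "x = y" | "y < x" by linarith
  then show ?thesis
  proof cases
    case 1
    then show ?thesis
      using uig_edge_iff_le_last_neighbour[OF assms 1] by (auto simp: reach_adj_def)
  next
    case 2
    then show ?thesis
      by (simp add: reach_adj_def uig_edge_def)
  next
    case 3
    then show ?thesis
      using uig_edge_iff_le_last_neighbour[OF assms 3]
      by (auto simp: reach_adj_def uig_edge_def Int_commute)
  qed
qed

lemma chi_E_eq_reach_adj:
  "unit_interval_rep N l \<Longrightarrow>
     chi_E N l a = reach_adj (last_neighbour N l) (bits_x (nbits N) a) (bits_y (nbits N) a)"
  using uig_edge_iff_reach_adj by (simp add: chi_E_def Let_def)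

section \<open>Summing the level bounds\<close>

lemma square_le_pow2: "(e::nat) * e \<le> 16 * 2 ^ e"
proof (induction e)
  case 0
  then show ?case by simp
next
  case (Suc e)
  have "e < 2 ^ e"
    by (rule less_exp)
  then have "2 * e + 1 \<le> 16 * 2 ^ e"
    by linarith
  with Suc show ?case by simp
qed

lemma sum_exp_plus_const_le: "(\<Sum>k<m. 5 * (2::nat) ^ k + 2) \<le> 5 * 2 ^ m + 2 * m"
  by (induction m) simp_all

lemma low_levels_bound:
  fixes g :: "nat \<Rightarrow> nat"
  assumes g: "\<And>k. k < n \<Longrightarrow> g k \<le> 5 * 2 ^ k + 2" and "D \<le> n" "n < 8 * 2 ^ D"
  shows "(\<Sum>k<n - D. g k) * n \<le> 72 * 2 ^ n"
proof -
  have "(\<Sum>k<n - D. g k) \<le> (\<Sum>k<n - D. 5 * 2 ^ k + 2)"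
    using g by (intro sum_mono) simp
  also have "\<dots> \<le> 5 * 2 ^ (n - D) + 2 * n"
    using sum_exp_plus_const_le[of "n - D"] by simp
  finally have "(\<Sum>k<n - D. g k) * n \<le> (5 * 2 ^ (n - D) + 2 * n) * n"
    by (rule mult_right_mono) simp
  also have "\<dots> = 5 * (2 ^ (n - D) * n) + 2 * (n * n)"
    by (simp add: algebra_simps)
  also have "2 ^ (n - D) * n \<le> 2 ^ (n - D) * (8 * 2 ^ D)"
    using assms(3) by simp
  also have "\<dots> = 8 * 2 ^ n"
    using assms(2) by (simp add: power_add[symmetric])
  finally show ?thesis
    using square_le_pow2[of n] by simp
qed

lemma high_levels_bound:
  fixes g :: "nat \<Rightarrow> nat"
  assumes g: "\<And>k. k < n \<Longrightarrow> g k \<le> 3 * 4 ^ (2 ^ (n - k))" and "4 * 2 ^ D \<le> n"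
  shows "(\<Sum>k = n - D..<n. g k) * n \<le> 192 * 2 ^ n"
proof -
  define P where "P = (2::nat) ^ D"
  define e where "e = n - 2 * P"
  have "D < P"
    unfolding P_def by (rule less_exp)
  with assms(2) have "D \<le> n"
    unfolding P_def by linarith
  have "g k \<le> 3 * 4 ^ P" if "k \<in> {n - D..<n}" for k
  proof -
    have "(2::nat) ^ (n - k) \<le> P"
      unfolding P_def using that by (intro power_increasing) auto
    then have "(4::nat) ^ (2 ^ (n - k)) \<le> 4 ^ P"
      by (rule power_increasing) simp
    moreover have "g k \<le> 3 * 4 ^ (2 ^ (n - k))"
      using g that by simp
    ultimately show ?thesis
      by linarith
  qed
  then have "(\<Sum>k = n - D..<n. g k) \<le> D * (3 * 4 ^ P)"
    using sum_mono[of "{n - D..<n}" g "\<lambda>_. 3 * 4 ^ P"] \<open>D \<le> n\<close> by simp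
  then have "(\<Sum>k = n - D..<n. g k) * n \<le> D * (3 * 4 ^ P) * n"
    by (rule mult_right_mono) simp
  also have "\<dots> \<le> n * (3 * 4 ^ P) * n"
    using \<open>D \<le> n\<close> by (intro mult_right_mono) simp_all
  also have "\<dots> = 3 * (n * n * 4 ^ P)"
    by (simp add: algebra_simps)
  also have "\<dots> \<le> 3 * (64 * 2 ^ e * 4 ^ P)"
  proof -
    have "n * n \<le> (2 * e) * (2 * e)"
      using assms(2) by (intro mult_le_mono) (simp_all add: e_def P_def)
    also have "\<dots> \<le> 64 * 2 ^ e"
      using square_le_pow2[of e] by simp
    finally show ?thesis
      by simp
  qed
  also have "\<dots> = 192 * 2 ^ (e + 2 * P)"
    by (simp add: power_add power_mult)
  also have "e + 2 * P = n"
    using assms(2) by (simp add: e_def P_def)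
  finally show ?thesis .
qed

lemma level_sum_bound:
  fixes g :: "nat \<Rightarrow> nat"
  assumes "n \<ge> 1"
    and low: "\<And>k. k < n \<Longrightarrow> g k \<le> 5 * 2 ^ k + 2"
    and high: "\<And>k. k < n \<Longrightarrow> g k \<le> 3 * 4 ^ (2 ^ (n - k))"
  shows "(2 + 3 * (\<Sum>k<n. g k)) * n \<le> 1000 * 2 ^ n"
proof (cases "n \<le> 3")
  case True
  have "(\<Sum>k<n. g k) \<le> (\<Sum>k<n. 5 * 2 ^ k + 2)"
    using low by (intro sum_mono) simp
  also have "\<dots> \<le> 5 * 2 ^ n + 2 * n"
    by (rule sum_exp_plus_const_le)
  finally have "(\<Sum>k<n. g k) \<le> 5 * 2 ^ n + 2 * n" .
  moreover have "n = 1 \<or> n = 2 \<or> n = 3"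
    using True assms(1) by auto
  ultimately show ?thesis
    by auto
next
  case False
  \<comment> \<open>The last D levels, with 2^D about n/8, get the doubly exponential bound, the others the linear one.\<close>
  then obtain D where D: "2 ^ D \<le> n div 4" "n div 4 < 2 ^ Suc D"
    using ex_power_ivl1[of 2 "n div 4"] by fastforce
  then have "4 * 2 ^ D \<le> n" "n < 8 * 2 ^ D"
    by simp_all
  moreover have "D \<le> n"
    using less_exp[of D] \<open>4 * 2 ^ D \<le> n\<close> by linarith
  ultimately have "(\<Sum>k<n - D. g k) * n \<le> 72 * 2 ^ n" "(\<Sum>k = n - D..<n. g k) * n \<le> 192 * 2 ^ n"
    using low_levels_bound[OF low] high_levels_bound[OF high] by simp_all
  moreover have "(\<Sum>k<n. g k) = (\<Sum>k<n - D. g k) + (\<Sum>k = n - D..<n. g k)"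
    using sum.atLeastLessThan_concat[of 0 "n - D" n g] by (simp add: lessThan_atLeast0)
  then have "(2 + 3 * (\<Sum>k<n. g k)) * n
      = 2 * n + 3 * ((\<Sum>k<n - D. g k) * n) + 3 * ((\<Sum>k = n - D..<n. g k) * n)"
    by (simp add: algebra_simps)
  moreover have "n < 2 ^ n"
    by (rule less_exp)
  ultimately show ?thesis
    by linarith
qed

lemma sum_le_three_times_even_terms:
  fixes h :: "nat \<Rightarrow> nat"
  assumes "\<And>k. k < m \<Longrightarrow> h (Suc (2 * k)) \<le> 2 * h (2 * k)"
  shows "(\<Sum>j<2 * m. h j) \<le> 3 * (\<Sum>k<m. h (2 * k))"
  using assms
proof (induction m)
  case 0
  then show ?case by simp
next
  case (Suc m)
  have "(\<Sum>j<2 * Suc m. h j) = (\<Sum>j<2 * m. h j) + h (2 * m) + h (Suc (2 * m))"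
    by simp
  moreover have "(\<Sum>k<Suc m. h (2 * k)) = (\<Sum>k<m. h (2 * k)) + h (2 * m)"
    by simp
  moreover have "(\<Sum>j<2 * m. h j) \<le> 3 * (\<Sum>k<m. h (2 * k))"
    using Suc by simp
  moreover have "h (Suc (2 * m)) \<le> 2 * h (2 * m)"
    using Suc.prems by simp
  ultimately show ?case
    by linarith
qed

lemma nbits_bounds:
  assumes "N \<ge> 2"
  shows "nbits N \<ge> 1" "N \<le> 2 ^ nbits N" "2 ^ nbits N < 2 * N" "log 2 (real N) \<le> real (nbits N)"
proof -
  define x where "x = log 2 (real N)"
  have "x \<ge> 1"
    unfolding x_def using assms by simp
  then have n: "real (nbits N) = of_int \<lceil>x\<rceil>"
    unfolding nbits_def x_def[symmetric] by simp
  then show "log 2 (real N) \<le> real (nbits N)" "nbits N \<ge> 1"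
    using \<open>x \<ge> 1\<close> unfolding x_def[symmetric] by (simp, linarith)
  have N: "real N = 2 powr x"
    unfolding x_def using assms by simp
  have "real N \<le> 2 powr real (nbits N)"
    unfolding N n by (intro powr_mono) simp_all
  then show "N \<le> 2 ^ nbits N"
    by (simp add: powr_realpow flip: of_nat_le_iff)
  have "2 powr (real (nbits N) - 1) < 2 powr x"
    using n ceiling_correct[of x] by simp
  then have "2 powr (real (nbits N) - 1) < real N"
    unfolding N .
  then have "real (2 ^ nbits N) < real (2 * N)"
    by (simp add: powr_diff powr_realpow)
  then show "2 ^ nbits N < 2 * N"
    by (simp only: of_nat_less_iff)
qed

lemma card_subfunctions_unit_interval:
  assumes U: "unit_interval_rep N l" and "k < nbits N" and N: "N \<le> 2 ^ nbits N"
  shows "card (subfunctions (interleaved_order (nbits N)) (chi_E N l) (2 * k)) \<le> 5 * 2 ^ k + 2"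
    and "card (subfunctions (interleaved_order (nbits N)) (chi_E N l) (2 * k)) \<le> 3 * 4 ^ (2 ^ (nbits N - k))"
proof -
  let ?n = "nbits N" and ?r = "last_neighbour N l"
  define B where "B = (2::nat) ^ (?n - k)"
  define K where "K = (2::nat) ^ k"
  let ?blocks = "\<lambda>(A, A') a. reach_adj ?r (A * B + bits_x (?n - k) a) (A' * B + bits_y (?n - k) a)"
  let ?top = "\<lambda>p. (top_bits False ?n k p, top_bits True ?n k p)"
  have S: "subfunctions (interleaved_order ?n) (chi_E N l) (2 * k) = ?blocks ` range ?top"
    unfolding subfunctions_def
    using subfunction_interleaved_order[where F = "reach_adj ?r", OF chi_E_eq_reach_adj[OF U]] \<open>k < ?n\<close>
    by (auto simp: B_def mult.commute image_iff)
  have u: "bits_x (?n - k) a < B" "bits_y (?n - k) a < B" for a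
    unfolding B_def by (simp_all add: bits_x_less bits_y_less)
  have mono: "mono ?r"
    by (rule mono_last_neighbour[OF U])
  show "card (subfunctions (interleaved_order ?n) (chi_E N l) (2 * k)) \<le> 3 * 4 ^ (2 ^ (?n - k))"
    unfolding S using card_blocks_le_exp[OF mono u] by (simp add: B_def)
  have "K * B = 2 ^ ?n"
    unfolding K_def B_def using \<open>k < ?n\<close> by (simp add: power_add[symmetric])
  then have rK: "?r (K * B) = K * B"
    using N by (simp add: last_neighbour_def)
  have "range ?top \<subseteq> {..<K} \<times> {..<K}"
    unfolding K_def using top_bits_less by auto
  then have "card (?blocks ` range ?top) \<le> card (?blocks ` ({..<K} \<times> {..<K}))"
    by (intro card_mono image_mono) simp_all
  also have "\<dots> \<le> 5 * K + 2"
    using card_blocks_le_linear[OF mono _ rK u] by (simp add: B_def)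
  finally show "card (subfunctions (interleaved_order ?n) (chi_E N l) (2 * k)) \<le> 5 * 2 ^ k + 2"
    unfolding S K_def .
qed

lemma chi_E_size_bound:
  assumes "N \<ge> 2" "unit_interval_rep N l"
  shows "min_obdd_size (interleaved_order (nbits N)) (chi_E N l) * nbits N \<le> 1000 * 2 ^ nbits N"
proof -
  let ?n = "nbits N"
  let ?card = "\<lambda>j. card (subfunctions (interleaved_order ?n) (chi_E N l) j)"
  have "\<forall>v \<in> set (interleaved_order ?n). a v = a' v \<Longrightarrow> chi_E N l a = chi_E N l a'" for a a'
    using bits_eq_if_agree[of "nbits N" a a'] by (simp add: chi_E_def Let_def)
  then have "min_obdd_size (interleaved_order ?n) (chi_E N l) \<le> 2 + (\<Sum>j<2 * ?n. ?card j)"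
    using min_obdd_size_le_subfunctions[OF distinct_interleaved_order]
    by (simp add: length_interleaved_order)
  also have "(\<Sum>j<2 * ?n. ?card j) \<le> 3 * (\<Sum>k<?n. ?card (2 * k))"
    by (intro sum_le_three_times_even_terms card_subfunctions_Suc_le distinct_interleaved_order)
      (simp add: length_interleaved_order)
  finally have "min_obdd_size (interleaved_order ?n) (chi_E N l) * ?n \<le> (2 + 3 * (\<Sum>k<?n. ?card (2 * k))) * ?n"
    by (intro mult_right_mono) simp_all
  also have "\<dots> \<le> 1000 * 2 ^ ?n"
    using nbits_bounds[OF assms(1)] card_subfunctions_unit_interval[OF assms(2)]
    by (intro level_sum_bound) simp_all
  finally show ?thesis .
qed

theorem mainTheorem2:
  shows "\<exists>c::real. c > 0 \<and>
    (\<forall>N (l :: nat \<Rightarrow> real). N \<ge> 2 \<and> unit_interval_rep N l \<longrightarrow>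
       real (min_obdd_size (interleaved_order (nbits N)) (chi_E N l)) \<le> c * real N / log 2 (real N))"
proof (intro exI[of _ 2000] conjI allI impI)
  fix N :: nat and l :: "nat \<Rightarrow> real"
  assume "N \<ge> 2 \<and> unit_interval_rep N l"
  then have N: "N \<ge> 2" and U: "unit_interval_rep N l"
    by simp_all
  let ?s = "real (min_obdd_size (interleaved_order (nbits N)) (chi_E N l))"
  have "?s * nbits N \<le> 1000 * 2 ^ nbits N"
    using of_nat_le_iff[THEN iffD2, OF chi_E_size_bound[OF N U]] by simp
  moreover have "(2::real) ^ nbits N < 2 * N"
    using of_nat_less_iff[THEN iffD2, OF nbits_bounds(3)[OF N]] by simp
  ultimately have "?s * nbits N \<le> 2000 * real N"
    by linarith
  then have "?s \<le> 2000 * real N / nbits N"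
    using nbits_bounds(1)[OF N] by (simp add: pos_le_divide_eq)
  also have "\<dots> \<le> 2000 * real N / log 2 (real N)"
    using nbits_bounds(1,4)[OF N] N by (intro divide_left_mono mult_pos_pos) simp_all
  finally show "?s \<le> 2000 * real N / log 2 (real N)" .
qed simp

end
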